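(* Let $n\ge 2$, $m\ge 1$ and consider a star junction in which pipes $P_1,\dots,P_n$ connect at a single node to pipes $P_{n+1},\dots,P_{n+m}$. Suppose real differentiable functions $p_{j,\ell},p_{j,r},q_{j,\ell},q_{j,r}$ ($j=1,\dots,n+m$) satisfy, for all $t$, \[ \dot p_{j,r}=c_j(q_{j,r}-q_{j,\ell}),\qquad \dot q_{j,\ell}=b_jp_{j,r}+d_jp_{j,\ell}+e_jq_{j,\ell}, \] and the junction constraints $p_{1,r}=\dots=p_{n,r}=p_{n+1,\ell}=\dots=p_{n+m,\ell}$ and $\sum_{k=1}^n q_{k,r}=\sum_{j=n+1}^{n+m}q_{j,\ell}$. Define \[ x=[p_{1,r},p_{n+1,r},\dots,p_{n+m,r},q_{1,\ell},\dots,q_{n+m,\ell}]^\top\in\mathbb R^{n+2m+1},\quad u=[p_{1,\ell},\dots,p_{n,\ell},q_{n+1,r},\dots,q_{n+m,r}]^\top\in\mathbb R^{n+m}, \] \[ y=[p_{n+1,r},\dots,p_{n+m,r},q_{1,\ell},\dots,q_{n,\ell}]^\top\in\mathbb R^{n+m}. \] Then $\dot x=Ax+Bu$, $y=Cx$, where, with row blocks and column blocks of $A$ of sizes $(1,m,n,m)$, \[ A=\begin{bmatrix} 0&\mathbf 0_m^\top&-a\mathbf 1_n^\top&a\mathbf 1_m^\top\\ \mathbf 0_m&\mathbf 0_{m,m}&\mathbf 0_{m,n}&-\operatorname{diag}(c_{n+1},\dots,c_{n+m})\\ (b_1,\dots,b_n)^\top&\mathbf 0_{n,m}&\operatorname{diag}(e_1,\dots,e_n)&\mathbf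 0_{n,m}\\ (d_{n+1},\dots,d_{n+m})^\top&\operatorname{diag}(b_{n+1},\dots,b_{n+m})&\mathbf 0_{m,n}&\operatorname{diag}(e_{n+1},\dots,e_{n+m}) \end{bmatrix}, \] \[ B=\begin{bmatrix} \mathbf 0_n^\top&\mathbf 0_m^\top\\ \mathbf 0_{m,n}&\operatorname{diag}(c_{n+1},\dots,c_{n+m})\\ \operatorname{diag}(d_1,\dots,d_n)&\mathbf 0_{n,m}\\ \mathbf 0_{m,n}&\mathbf 0_{m,m} \end{bmatrix},\qquad C=\begin{bmatrix}\mathbf 0_{n+m}&I_{n+m}&\mathbf 0_{n+m,m}\end{bmatrix}, \] and $a=c_1\left(\sum_{j=1}^n\prod_{i=1,\,i\neq j}^n c_i\right)^{-1}\prod_{i=2}^n c_i$.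
   Context: Linearized isothermal one-dimensional pipe flow model: $p$ pressure, $q$ mass flow, subscripts $\ell,r$ the left ($x=0$) and right ($x=L_j$) ends of pipe $P_j$. Coefficients: $c_j=-\frac{R_sT_0z_0}{A_jL_j}$, $b_j=-\frac{A_j}{L_j}$, $d_j=\frac{A_j}{L_j}+\frac{\lambda_j R_sT_0z_0}{2D_jA_j}\frac{q_{ss,j}|q_{ss,j}|}{p_{\ell,ss,j}^2}-\frac{A_jgh_j}{R_sT_0z_0L_j}$, $e_j=-\frac{\lambda_j R_sT_0z_0}{D_jA_j}\frac{|q_{ss,j}|}{p_{\ell,ss,j}}$, with positive constants $R_s,T_0,z_0$, gravity $g$, and per-pipe area $A_j>0$, length $L_j>0$, diameter $D_j>0$, friction factor $\lambda_j$, elevation difference $h_j$, nominal flow $q_{ss,j}>0$, nominal left pressure $p_{\ell,ss,j}>0$; hence all $c_j<0$. $\mathbf 0_i$, $\mathbf 0_{i,j}$ are zero vectors/matrices (a vector $\mathbf 0_i$ used as a block is a column), $\mathbf 1_i$ the all-ones column vector, $I_k$ the identity. *)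

theory Defs
  imports Complex_Main "Jordan_Normal_Form.Matrix"
begin

(* Pipes are indexed 1..n+m; vector/matrix indices (JNF) are 0-based. *)

definition coef_c :: "real \<Rightarrow> real \<Rightarrow> real \<Rightarrow> real \<Rightarrow> real \<Rightarrow> real" where
  "coef_c Rs T0 z0 Aj Lj = - (Rs * T0 * z0) / (Aj * Lj)"

definition coef_b :: "real \<Rightarrow> real \<Rightarrow> real" where
  "coef_b Aj Lj = - (Aj / Lj)"

definition coef_d :: "real \<Rightarrow> real \<Rightarrow> real \<Rightarrow> real \<Rightarrow> real \<Rightarrow> real \<Rightarrow> real \<Rightarrow> real
    \<Rightarrow> real \<Rightarrow> real \<Rightarrow> real \<Rightarrow> real" where
  "coef_d Rs T0 z0 g Aj Lj Dj lamj hj qss pss =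
     Aj / Lj + (lamj * Rs * T0 * z0) / (2 * Dj * Aj) * (qss * \<bar>qss\<bar>) / pss ^ 2
     - (Aj * g * hj) / (Rs * T0 * z0 * Lj)"

definition coef_e :: "real \<Rightarrow> real \<Rightarrow> real \<Rightarrow> real \<Rightarrow> real \<Rightarrow> real \<Rightarrow> real \<Rightarrow> real \<Rightarrow> real" where
  "coef_e Rs T0 z0 Aj Dj lamj qss pss = - ((lamj * Rs * T0 * z0) / (Dj * Aj)) * \<bar>qss\<bar> / pss"

definition junction_a :: "nat \<Rightarrow> (nat \<Rightarrow> real) \<Rightarrow> real" where
  "junction_a n c = c 1 * inverse (\<Sum>j = 1..n. \<Prod>i \<in> {1..n} - {j}. c i) * (\<Prod>i = 2..n. c i)"

definition state_x :: "nat \<Rightarrow> nat \<Rightarrow> (nat \<Rightarrow> real \<Rightarrow> real) \<Rightarrow> (nat \<Rightarrow> real \<Rightarrow> real)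
    \<Rightarrow> real \<Rightarrow> real vec" where
  "state_x n m pr ql t = vec (n + 2 * m + 1)
     (\<lambda>i. if i = 0 then pr 1 t else if i \<le> m then pr (n + i) t else ql (i - m) t)"

definition input_u :: "nat \<Rightarrow> nat \<Rightarrow> (nat \<Rightarrow> real \<Rightarrow> real) \<Rightarrow> (nat \<Rightarrow> real \<Rightarrow> real)
    \<Rightarrow> real \<Rightarrow> real vec" where
  "input_u n m pl qr t = vec (n + m) (\<lambda>i. if i < n then pl (i + 1) t else qr (i + 1) t)"

definition output_y :: "nat \<Rightarrow> nat \<Rightarrow> (nat \<Rightarrow> real \<Rightarrow> real) \<Rightarrow> (nat \<Rightarrow> real \<Rightarrow> real)
    \<Rightarrow> real \<Rightarrow> real vec" where
  "output_y n m pr ql t = vec (n + m) (\<lambda>i. if i < m then pr (n + i + 1) t else ql (i - m + 1) t)"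

(* Matrix A, written entrywise; row/column blocks have sizes (1,m,n,m), i.e.
   index 0 | 1..m | m+1..m+n | m+n+1..n+2m *)
definition sys_A :: "nat \<Rightarrow> nat \<Rightarrow> real \<Rightarrow> (nat \<Rightarrow> real) \<Rightarrow> (nat \<Rightarrow> real) \<Rightarrow> (nat \<Rightarrow> real)
    \<Rightarrow> (nat \<Rightarrow> real) \<Rightarrow> real mat" where
  "sys_A n m a b c d e = mat (n + 2 * m + 1) (n + 2 * m + 1) (\<lambda>(i, k).
     if i = 0 then
       (if m + 1 \<le> k \<and> k \<le> m + n then - a else if m + n + 1 \<le> k then a else 0)
     else if i \<le> m then
       (if k = m + n + i then - c (n + i) else 0)
     else if i \<le> m + n then
       (if k = 0 then b (i - m) else if k = i then e (i - m) else 0)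
     else
       (if k = 0 then d (i - m) else if k = i - m - n then b (i - m)
        else if k = i then e (i - m) else 0))"

definition sys_B :: "nat \<Rightarrow> nat \<Rightarrow> (nat \<Rightarrow> real) \<Rightarrow> (nat \<Rightarrow> real) \<Rightarrow> real mat" where
  "sys_B n m c d = mat (n + 2 * m + 1) (n + m) (\<lambda>(i, k).
     if i = 0 then 0
     else if i \<le> m then (if k = n + i - 1 then c (n + i) else 0)
     else if i \<le> m + n then (if k = i - m - 1 then d (i - m) else 0)
     else 0)"

definition sys_C :: "nat \<Rightarrow> nat \<Rightarrow> real mat" where
  "sys_C n m = mat (n + m) (n + 2 * m + 1) (\<lambda>(i, k). if k = i + 1 then 1 else 0)"

end

theory Submission
  imports Defs
begin

text \<open>
  All inlet pipes share the junction pressure p = p_{1,r}, so p' = c_k (q_{k,r} - q_{k,l}) for every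
  inlet k. Dividing by c_k, summing over the inlets and using the flow balance at the node gives
  p' (\<Sum>_k 1/c_k) = \<Sum>_out q_{j,l} - \<Sum>_in q_{k,l}, and the constant a is exactly
  (\<Sum>_k 1/c_k)^-1, which is well defined because all c_k < 0. Every other row of A x + B u is one
  of the pipe equations, with the junction pressure substituted for p_{k,r} and p_{j,l}.
\<close>

lemma mat_mult_vec_nth_supported:
  assumes "i < nr" and "K \<subseteq> {..<nc}" and "\<And>k. k < nc \<Longrightarrow> k \<notin> K \<Longrightarrow> f (i, k) = 0"
  shows "(mat nr nc f *\<^sub>v vec nc x) $ i = (\<Sum>k\<in>K. f (i, k) * x k)"
proof -
  have "(mat nr nc f *\<^sub>v vec nc x) $ i = (\<Sum>k<nc. f (i, k) * x k)"
    using assms(1) by (auto simp: scalar_prod_def atLeast0LessThan intro!: sum.cong)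
  also have "\<dots> = (\<Sum>k\<in>K. f (i, k) * x k)"
    using assms(2,3) by (intro sum.mono_neutral_right) auto
  finally show ?thesis .
qed

lemma dim_row_sys_B [simp]: "dim_row (sys_B n m c d) = n + 2 * m + 1"
  by (simp add: sys_B_def)

lemma sys_rhs_nth_junction:
  "(sys_A n m a b c d e *\<^sub>v vec (n + 2 * m + 1) x + sys_B n m c d *\<^sub>v vec (n + m) u) $ 0
     = a * ((\<Sum>j = n + 1..n + m. x (m + j)) - (\<Sum>j = 1..n. x (m + j)))"
proof -
  let ?K = "{m + 1..m + n} \<union> {m + n + 1..n + 2 * m}"
  have "(sys_A n m a b c d e *\<^sub>v vec (n + 2 * m + 1) x) $ 0
      = (\<Sum>k \<in> ?K. (if k \<le> m + n then - a else a) * x k)"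
    unfolding sys_A_def by (subst mat_mult_vec_nth_supported[where K = ?K]) (auto intro!: sum.cong)
  also have "\<dots> = a * ((\<Sum>k = m + n + 1..n + 2 * m. x k) - (\<Sum>k = m + 1..m + n. x k))"
    by (subst sum.union_disjoint) (auto simp: sum_distrib_left sum_negf right_diff_distrib)
  also have "\<dots> = a * ((\<Sum>j = n + 1..n + m. x (m + j)) - (\<Sum>j = 1..n. x (m + j)))"
  proof -
    have "sum x {m + n + 1..n + 2 * m} = (\<Sum>j = n + 1..n + m. x (m + j))"
      by (rule sum.reindex_cong[of "(+) m"]) (auto simp: image_add_atLeastAtMost)
    moreover have "sum x {m + 1..m + n} = (\<Sum>j = 1..n. x (m + j))"
      by (rule sum.reindex_cong[of "(+) m"]) (auto simp: image_add_atLeastAtMost)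
    ultimately show ?thesis
      by simp
  qed
  moreover have "(sys_B n m c d *\<^sub>v vec (n + m) u) $ 0 = 0"
    unfolding sys_B_def by (subst mat_mult_vec_nth_supported[where K = "{}"]) auto
  ultimately show ?thesis
    by (simp add: index_add_vec)
qed

lemma sys_rhs_nth_outlet_pressure:
  assumes "1 \<le> j" and "j \<le> m"
  shows "(sys_A n m a b c d e *\<^sub>v vec (n + 2 * m + 1) x + sys_B n m c d *\<^sub>v vec (n + m) u) $ j
    = c (n + j) * (u (n + j - 1) - x (m + n + j))"
proof -
  have "(sys_A n m a b c d e *\<^sub>v vec (n + 2 * m + 1) x) $ j = - c (n + j) * x (m + n + j)"
    using assms unfolding sys_A_def by (subst mat_mult_vec_nth_supported[where K = "{m + n + j}"]) auto
  moreover have "(sys_B n m c d *\<^sub>v vec (n + m) u) $ j = c (n + j) * u (n + j - 1)"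
    using assms unfolding sys_B_def by (subst mat_mult_vec_nth_supported[where K = "{n + j - 1}"]) auto
  ultimately show ?thesis
    using assms by (simp add: index_add_vec algebra_simps)
qed

lemma sys_rhs_nth_inlet_flow:
  assumes "1 \<le> j" and "j \<le> n"
  shows "(sys_A n m a b c d e *\<^sub>v vec (n + 2 * m + 1) x + sys_B n m c d *\<^sub>v vec (n + m) u) $ (m + j)
    = b j * x 0 + d j * u (j - 1) + e j * x (m + j)"
proof -
  have "(sys_A n m a b c d e *\<^sub>v vec (n + 2 * m + 1) x) $ (m + j) = b j * x 0 + e j * x (m + j)"
    using assms unfolding sys_A_def by (subst mat_mult_vec_nth_supported[where K = "{0, m + j}"]) auto
  moreover have "(sys_B n m c d *\<^sub>v vec (n + m) u) $ (m + j) = d j * u (j - 1)"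
    using assms unfolding sys_B_def by (subst mat_mult_vec_nth_supported[where K = "{j - 1}"]) auto
  ultimately show ?thesis
    using assms by (simp add: index_add_vec)
qed

lemma sys_rhs_nth_outlet_flow:
  assumes "1 \<le> j" and "j \<le> m"
  shows "(sys_A n m a b c d e *\<^sub>v vec (n + 2 * m + 1) x + sys_B n m c d *\<^sub>v vec (n + m) u) $ (m + n + j)
    = b (n + j) * x j + d (n + j) * x 0 + e (n + j) * x (m + n + j)"
proof -
  have "(sys_A n m a b c d e *\<^sub>v vec (n + 2 * m + 1) x) $ (m + n + j)
      = d (n + j) * x 0 + b (n + j) * x j + e (n + j) * x (m + n + j)"
    using assms unfolding sys_A_def
    by (subst mat_mult_vec_nth_supported[where K = "{0, j, m + n + j}"]) auto
  moreover have "(sys_B n m c d *\<^sub>v vec (n + m) u) $ (m + n + j) = 0"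
    using assms unfolding sys_B_def by (subst mat_mult_vec_nth_supported[where K = "{}"]) auto
  ultimately show ?thesis
    using assms by (simp add: index_add_vec)
qed

lemma sys_C_mult_vec:
  "sys_C n m *\<^sub>v vec (n + 2 * m + 1) x = vec (n + m) (\<lambda>i. x (i + 1))"
proof (rule eq_vecI)
  fix i assume "i < dim_vec (vec (n + m) (\<lambda>i. x (i + 1)))"
  then show "(sys_C n m *\<^sub>v vec (n + 2 * m + 1) x) $ i = vec (n + m) (\<lambda>i. x (i + 1)) $ i"
    unfolding sys_C_def by (subst mat_mult_vec_nth_supported[where K = "{i + 1}"]) auto
qed (simp add: sys_C_def)

lemma state_x_has_derivative_nth:
  fixes pl pr ql qr :: "nat \<Rightarrow> real \<Rightarrow> real"
  assumes junction: "(pr 1 has_real_derivative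
                      a * ((\<Sum>j = n + 1..n + m. ql j t) - (\<Sum>k = 1..n. ql k t))) (at t)"
    and ode_p: "\<And>j. j \<in> {1..n+m} \<Longrightarrow> (pr j has_real_derivative c j * (qr j t - ql j t)) (at t)"
    and ode_q: "\<And>j. j \<in> {1..n+m} \<Longrightarrow>
                  (ql j has_real_derivative b j * pr j t + d j * pl j t + e j * ql j t) (at t)"
    and junc_p_in: "\<And>k. k \<in> {1..n} \<Longrightarrow> pr k t = pr 1 t"
    and junc_p_out: "\<And>j. j \<in> {n+1..n+m} \<Longrightarrow> pl j t = pr 1 t"
    and i_bound: "i < n + 2 * m + 1"
  shows "((\<lambda>s. state_x n m pr ql s $ i) has_real_derivative
           (sys_A n m a b c d e *\<^sub>v state_x n m pr ql t + sys_B n m c d *\<^sub>v input_u n m pl qr t) $ i)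
         (at t)"
proof -
  consider "i = 0"
    | (outlet_pressure) j where "i = j" "1 \<le> j" "j \<le> m"
    | (inlet_flow) j where "i = m + j" "1 \<le> j" "j \<le> n"
    | (outlet_flow) j where "i = m + n + j" "1 \<le> j" "j \<le> m"
    using i_bound that(2)[of i] that(3)[of "i - m"] that(4)[of "i - m - n"]
    by (cases "i = 0"; cases "i \<le> m"; cases "i \<le> m + n") (auto simp: that(1))
  then show ?thesis
  proof cases
    case 1
    then show ?thesis
      using junction unfolding 1 state_x_def input_u_def sys_rhs_nth_junction by simp
  next
    case (outlet_pressure j)
    then show ?thesis
      using ode_p[of "n + j"]
      unfolding outlet_pressure(1) state_x_def input_u_def
        sys_rhs_nth_outlet_pressure[OF outlet_pressure(2,3)]
      by (simp add: less_diff_conv2)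
  next
    case (inlet_flow j)
    then show ?thesis
      using ode_q[of j] junc_p_in[of j]
      unfolding inlet_flow(1) state_x_def input_u_def sys_rhs_nth_inlet_flow[OF inlet_flow(2,3)]
      by (simp add: less_diff_conv2)
  next
    case (outlet_flow j)
    then show ?thesis
      using ode_q[of "n + j"] junc_p_out[of "n + j"]
      unfolding outlet_flow(1) state_x_def input_u_def sys_rhs_nth_outlet_flow[OF outlet_flow(2,3)]
      by simp
  qed
qed

lemma output_y_eq_sys_C_mult_state_x:
  "output_y n m pr ql t = sys_C n m *\<^sub>v state_x n m pr ql t"
  unfolding state_x_def sys_C_mult_vec output_y_def by (auto simp: Suc_diff_le intro!: eq_vecI)

lemma coef_c_neg:
  assumes "Rs > 0" and "T0 > 0" and "z0 > 0" and "Aj > 0" and "Lj > 0"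
  shows "coef_c Rs T0 z0 Aj Lj < 0"
  using assms by (simp add: coef_c_def)

lemma junction_a_eq_inverse_sum:
  assumes "n \<ge> 1" and c_nz: "\<And>k. k \<in> {1..n} \<Longrightarrow> c k \<noteq> 0"
  shows "junction_a n c = inverse (\<Sum>k = 1..n. 1 / c k)"
proof -
  define P where "P = (\<Prod>i = 1..n. c i)"
  have "P \<noteq> 0"
    using c_nz by (simp add: P_def)
  have "(\<Sum>j = 1..n. \<Prod>i \<in> {1..n} - {j}. c i) = P * (\<Sum>k = 1..n. 1 / c k)"
    unfolding P_def sum_distrib_left by (rule sum.cong) (auto simp: prod_diff1 c_nz)
  moreover have "c 1 * (\<Prod>i = 2..n. c i) = P"
    using assms(1) by (simp add: P_def prod.atLeast_Suc_atMost numeral_2_eq_2)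
  ultimately have "junction_a n c = P * inverse (P * (\<Sum>k = 1..n. 1 / c k))"
    unfolding junction_a_def by (simp add: ac_simps)
  then show ?thesis
    using \<open>P \<noteq> 0\<close> by (simp add: inverse_mult_distrib)
qed

lemma junction_pressure_has_derivative:
  fixes pr ql qr :: "nat \<Rightarrow> real \<Rightarrow> real"
  assumes "n \<ge> 1"
    and c_nz: "\<And>k. k \<in> {1..n} \<Longrightarrow> c k \<noteq> 0"
    and S_nz: "(\<Sum>k = 1..n. 1 / c k) \<noteq> 0"
    and ode: "\<And>k. k \<in> {1..n} \<Longrightarrow> (pr k has_real_derivative c k * (qr k t - ql k t)) (at t)"
    and equal_pressure: "\<And>k s. k \<in> {1..n} \<Longrightarrow> pr k s = pr 1 s"
    and kirchhoff: "(\<Sum>k = 1..n. qr k t) = (\<Sum>j = n + 1..n + m. ql j t)"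
  shows "(pr 1 has_real_derivative
           inverse (\<Sum>k = 1..n. 1 / c k) * ((\<Sum>j = n + 1..n + m. ql j t) - (\<Sum>k = 1..n. ql k t)))
         (at t)"
proof -
  define D where "D = c 1 * (qr 1 t - ql 1 t)"
  have pr1: "(pr 1 has_real_derivative D) (at t)"
    unfolding D_def using ode assms(1) by simp
  have "qr k t - ql k t = D / c k" if k: "k \<in> {1..n}" for k
  proof -
    have "pr k = pr 1"
      using equal_pressure[OF k] by blast
    then have "(pr 1 has_real_derivative c k * (qr k t - ql k t)) (at t)"
      using ode[OF k] by simp
    then have "c k * (qr k t - ql k t) = D"
      using pr1 by (rule DERIV_unique)
    then show ?thesis
      using c_nz[OF k] by (simp add: field_simps)
  qed
  then have "(\<Sum>k = 1..n. qr k t) - (\<Sum>k = 1..n. ql k t) = D * (\<Sum>k = 1..n. 1 / c k)"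
    by (simp add: sum_subtractf[symmetric] sum_distrib_left)
  then have "D = inverse (\<Sum>k = 1..n. 1 / c k) * ((\<Sum>j = n + 1..n + m. ql j t) - (\<Sum>k = 1..n. ql k t))"
    using S_nz kirchhoff by (simp add: field_simps)
  then show ?thesis
    using pr1 by simp
qed

theorem corollary4:
  fixes n m :: nat
    and Rs T0 z0 g :: real
    and Ar L D lam h qss pss :: "nat \<Rightarrow> real"
    and c b d e :: "nat \<Rightarrow> real"
    and pl pr ql qr :: "nat \<Rightarrow> real \<Rightarrow> real"
  assumes n2: "n \<ge> 2" and m1: "m \<ge> 1"
    and consts_pos: "Rs > 0" "T0 > 0" "z0 > 0"
    and pipe_pos: "\<And>j. j \<in> {1..n+m} \<Longrightarrow>
                     Ar j > 0 \<and> L j > 0 \<and> D j > 0 \<and> qss j > 0 \<and> pss j > 0"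
    and c_def: "\<And>j. j \<in> {1..n+m} \<Longrightarrow> c j = coef_c Rs T0 z0 (Ar j) (L j)"
    and b_def: "\<And>j. j \<in> {1..n+m} \<Longrightarrow> b j = coef_b (Ar j) (L j)"
    and d_def: "\<And>j. j \<in> {1..n+m} \<Longrightarrow>
                  d j = coef_d Rs T0 z0 g (Ar j) (L j) (D j) (lam j) (h j) (qss j) (pss j)"
    and e_def: "\<And>j. j \<in> {1..n+m} \<Longrightarrow>
                  e j = coef_e Rs T0 z0 (Ar j) (D j) (lam j) (qss j) (pss j)"
    and diff: "\<And>j t. j \<in> {1..n+m} \<Longrightarrow>
                 pl j differentiable at t \<and> pr j differentiable at t \<and>
                 ql j differentiable at t \<and> qr j differentiable at t"
    and ode_p: "\<And>j t. j \<in> {1..n+m} \<Longrightarrow>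
                  (pr j has_real_derivative c j * (qr j t - ql j t)) (at t)"
    and ode_q: "\<And>j t. j \<in> {1..n+m} \<Longrightarrow>
                  (ql j has_real_derivative b j * pr j t + d j * pl j t + e j * ql j t) (at t)"
    and junc_p_in: "\<And>k t. k \<in> {1..n} \<Longrightarrow> pr k t = pr 1 t"
    and junc_p_out: "\<And>j t. j \<in> {n+1..n+m} \<Longrightarrow> pl j t = pr 1 t"
    and junc_q: "\<And>t. (\<Sum>k = 1..n. qr k t) = (\<Sum>j = n+1..n+m. ql j t)"
  shows "(\<forall>t. \<forall>i < n + 2 * m + 1.
            ((\<lambda>s. state_x n m pr ql s $ i) has_real_derivative
              (sys_A n m (junction_a n c) b c d e *\<^sub>v state_x n m pr ql t
               + sys_B n m c d *\<^sub>v input_u n m pl qr t) $ i) (at t))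
       \<and> (\<forall>t. output_y n m pr ql t = sys_C n m *\<^sub>v state_x n m pr ql t)"
proof -
  have c_neg: "c k < 0" if "k \<in> {1..n + m}" for k
    using c_def[OF that] pipe_pos[OF that] consts_pos by (simp add: coef_c_neg)
  have n1: "n \<ge> 1"
    using n2 by simp
  have c_nz: "c k \<noteq> 0" if "k \<in> {1..n}" for k
    using c_neg that by fastforce
  have ode_inlet: "(pr k has_real_derivative c k * (qr k t - ql k t)) (at t)" if "k \<in> {1..n}" for k t
    using that by (intro ode_p) auto
  have "0 < (\<Sum>k = 1..n. - (1 / c k))"
    using n1 c_neg by (intro sum_pos) (auto simp: divide_neg_pos)
  then have S_nz: "(\<Sum>k = 1..n. 1 / c k) \<noteq> 0"
    by (simp add: sum_negf)
  have a_eq: "junction_a n c = inverse (\<Sum>k = 1..n. 1 / c k)"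
    using n1 c_nz by (rule junction_a_eq_inverse_sum)
  have junction:
    "(pr 1 has_real_derivative junction_a n c * ((\<Sum>j = n + 1..n + m. ql j t) - (\<Sum>k = 1..n. ql k t)))
     (at t)" for t
    unfolding a_eq using n1 c_nz S_nz ode_inlet junc_p_in junc_q by (rule junction_pressure_has_derivative)
  show ?thesis
    by (blast intro: state_x_has_derivative_nth junction ode_p ode_q junc_p_in junc_p_out
        output_y_eq_sys_C_mult_state_x)
qed

end
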